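(* There are 3-SAT formulas $f,f'$ such that their literal-clause graphs are isomorphic, but $f$ is satisfiable and $f'$ is not.
   Context: A 3-SAT formula is a CNF formula (a set of clauses, each a set of at most 3 literals). The literal-clause graph of a CNF formula on variables $x_1,\dots,x_n$ is the unlabeled bipartite graph with the $2n$ literals $x_i,\neg x_i$ on one side, one vertex per clause on the other side, and an edge between literal $\ell$ and clause $c$ iff $\ell\in c$ (no edges between a literal and its negation). *)

theory Defs
  imports Main
begin

text \<open>A literal is a pair (i, b): (i, True) is x_i and (i, False) is the negation of x_i.\<close>
type_synonym lit = "nat \<times> bool"
type_synonym clause = "lit set"

type_synonym cnf = "nat \<times> clause set"

definition lits :: "nat \<Rightarrow> lit set" where
  "lits n = {1..n} \<times> UNIV"

definition is_3sat :: "cnf \<Rightarrow> bool" where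
  "is_3sat F \<longleftrightarrow> finite (snd F) \<and>
     (\<forall>c \<in> snd F. c \<subseteq> lits (fst F) \<and> card c \<le> 3)"

definition satisfiable :: "cnf \<Rightarrow> bool" where
  "satisfiable F \<longleftrightarrow> (\<exists>\<sigma> :: nat \<Rightarrow> bool. \<forall>c \<in> snd F. \<exists>(i, b) \<in> c. \<sigma> i = b)"

definition lc_vertices :: "cnf \<Rightarrow> (lit + clause) set" where
  "lc_vertices F = Inl ` lits (fst F) \<union> Inr ` snd F"

definition lc_adj :: "(lit + clause) \<Rightarrow> (lit + clause) \<Rightarrow> bool" where
  "lc_adj u v \<longleftrightarrow> (\<exists>l c. ((u = Inl l \<and> v = Inr c) \<or> (u = Inr c \<and> v = Inl l)) \<and> l \<in> c)"

definition lc_isomorphic :: "cnf \<Rightarrow> cnf \<Rightarrow> bool" where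
  "lc_isomorphic F G \<longleftrightarrow> (\<exists>\<phi>. bij_betw \<phi> (lc_vertices F) (lc_vertices G) \<and>
     (\<forall>u \<in> lc_vertices F. isl (\<phi> u) = isl u) \<and>
     (\<forall>u \<in> lc_vertices F. \<forall>v \<in> lc_vertices F. lc_adj (\<phi> u) (\<phi> v) \<longleftrightarrow> lc_adj u v))"

end

theory Submission
  imports Defs "HOL-Combinatorics.Transposition"
begin

text \<open>The literal-clause graph forgets which literals are complementary: renaming the literals by
  any permutation, even one that does not commute with negation, yields an isomorphic graph.
  Exchanging x_2 with the negation of x_1 turns the satisfiable formula with clauses {x_1}, {x_2}
  into the unsatisfiable one with clauses {x_1}, {\<not> x_1}.\<close>

lemma bij_betw_map_sum:
  assumes "bij_betw f A A'" and "bij_betw g B B'"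
  shows "bij_betw (map_sum f g) (Inl ` A \<union> Inr ` B) (Inl ` A' \<union> Inr ` B')"
proof (rule bij_betw_imageI)
  show "inj_on (map_sum f g) (Inl ` A \<union> Inr ` B)"
  proof (rule inj_onI)
    fix x y assume "x \<in> Inl ` A \<union> Inr ` B" "y \<in> Inl ` A \<union> Inr ` B" "map_sum f g x = map_sum f g y"
    then show "x = y"
      using bij_betw_imp_inj_on[OF assms(1)] bij_betw_imp_inj_on[OF assms(2)]
      by (elim UnE imageE) (simp_all add: inj_on_eq_iff)
  qed
  have "map_sum f g ` (Inl ` A \<union> Inr ` B) = Inl ` f ` A \<union> Inr ` g ` B"
    by (simp add: image_Un image_image)
  then show "map_sum f g ` (Inl ` A \<union> Inr ` B) = Inl ` A' \<union> Inr ` B'"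
    using bij_betw_imp_surj_on[OF assms(1)] bij_betw_imp_surj_on[OF assms(2)] by simp
qed

lemma lc_adj_simps [simp]:
  "lc_adj (Inl l) (Inr c) \<longleftrightarrow> l \<in> c"
  "lc_adj (Inr c) (Inl l) \<longleftrightarrow> l \<in> c"
  "\<not> lc_adj (Inl l) (Inl l')"
  "\<not> lc_adj (Inr c) (Inr c')"
  by (auto simp: lc_adj_def)

definition relabel_cnf :: "(lit \<Rightarrow> lit) \<Rightarrow> cnf \<Rightarrow> cnf" where
  "relabel_cnf \<pi> F = (fst F, image \<pi> ` snd F)"

lemma is_3sat_relabel_cnf:
  assumes "is_3sat F" and "\<pi> ` lits (fst F) \<subseteq> lits (fst F)"
  shows "is_3sat (relabel_cnf \<pi> F)"
  unfolding is_3sat_def relabel_cnf_def fst_conv snd_conv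
proof (intro conjI ballI)
  show "finite (image \<pi> ` snd F)" using assms(1) by (simp add: is_3sat_def)
next
  fix d assume "d \<in> image \<pi> ` snd F"
  then obtain c where "c \<in> snd F" and d: "d = \<pi> ` c" by blast
  then have "c \<subseteq> lits (fst F)" and "card c \<le> 3" using assms(1) by (auto simp: is_3sat_def)
  then show "d \<subseteq> lits (fst F)" and "card d \<le> 3"
    using assms(2) d card_image_le[of c \<pi>] finite_subset[of c "lits (fst F)"]
    by (auto simp: lits_def)
qed

lemma lc_isomorphic_relabel_cnf:
  assumes \<pi>: "bij_betw \<pi> (lits (fst F)) (lits (fst F))"
    and clauses: "\<forall>c \<in> snd F. c \<subseteq> lits (fst F)"
  shows "lc_isomorphic F (relabel_cnf \<pi> F)"
  unfolding lc_isomorphic_def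
proof (intro exI conjI ballI)
  let ?\<phi> = "map_sum \<pi> (image \<pi>)"
  have inj_\<pi>: "inj_on \<pi> (lits (fst F))" using \<pi> by (rule bij_betw_imp_inj_on)
  have "inj_on (image \<pi>) (snd F)"
    using inj_on_image_Pow[OF inj_\<pi>] clauses by (meson PowI inj_on_subset subsetI)
  then have "bij_betw (image \<pi>) (snd F) (image \<pi> ` snd F)"
    by (simp add: bij_betw_def)
  with \<pi> show "bij_betw ?\<phi> (lc_vertices F) (lc_vertices (relabel_cnf \<pi> F))"
    unfolding lc_vertices_def relabel_cnf_def by (simp add: bij_betw_map_sum)
  fix u assume u: "u \<in> lc_vertices F"
  then show "isl (?\<phi> u) = isl u" by (cases u) simp_all
  fix v assume "v \<in> lc_vertices F"
  with u show "lc_adj (?\<phi> u) (?\<phi> v) \<longleftrightarrow> lc_adj u v"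
    unfolding lc_vertices_def
    by (elim UnE imageE) (simp_all add: inj_on_image_mem_iff[OF inj_\<pi>] clauses)
qed

theorem lemma3:
  shows "\<exists>f f'. is_3sat f \<and> is_3sat f' \<and> lc_isomorphic f f' \<and>
           satisfiable f \<and> \<not> satisfiable f'"
proof (intro exI conjI)
  let ?f = "(2::nat, {{(1::nat, True)}, {(2, True)}})"
  let ?\<pi> = "transpose (2, True) (1, False)"
  have f_3sat: "is_3sat ?f" by (auto simp: is_3sat_def lits_def)
  have \<pi>_lits: "bij_betw ?\<pi> (lits 2) (lits 2)" by (simp add: lits_def)
  show "is_3sat ?f" by (fact f_3sat)
  show "is_3sat (relabel_cnf ?\<pi> ?f)"
    using is_3sat_relabel_cnf[OF f_3sat] bij_betw_imp_surj_on[OF \<pi>_lits] by simp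
  show "lc_isomorphic ?f (relabel_cnf ?\<pi> ?f)"
    using \<pi>_lits by (intro lc_isomorphic_relabel_cnf) (auto simp: lits_def)
  show "satisfiable ?f"
    unfolding satisfiable_def by (rule exI[of _ "\<lambda>_. True"]) auto
  have "relabel_cnf ?\<pi> ?f = (2, {{(1, True)}, {(1, False)}})"
    by (simp add: relabel_cnf_def)
  then show "\<not> satisfiable (relabel_cnf ?\<pi> ?f)"
    by (simp add: satisfiable_def)
qed

end
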